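(* Let $n\ge 2$, let $\sigma=(1,2,\dots,n-1)\in S_n$, and let $\rho\in S_n$ be defined by $\rho(n-1)=n$, $\rho(n)=n-1$, $\rho(k)=n-1-k$ for $1\le k\le n-2$. Let $\tau\in S_n$ be a permutation of order $2$ with $\tau(n)=n-1$ and $\tau\sigma^k\tau=\sigma^{\tau(k)}\tau\sigma^{\tau\rho\tau(k)}$ for all $k\in\{1,\dots,n-2\}$ (such a $\tau$ exists exactly when $IK_n$ is a $G$-graph, and then $IK_n\cong\Phi(\langle\sigma,\tau\rangle,\{\sigma,\tau\})$). Then all the orbits of the action of the group $\langle\rho,\tau\rangle$ on $\{1,\dots,n\}$ have six elements, except for either one or two orbits with two elements and, if $n$ is odd, one orbit with either one or three elements.
   Context: $S_n$ is the symmetric group on $\{1,\dots,n\}$ with product given by composition of functions (rightmost applied first). $K_n$ is the complete simple graph on $n$ vertices and $IK_n$ its incidence graph. For a group $G$ and a multiset $S$ of elements of $G$, $\Phi(G,S)$ is the multigraph whose vertex set is the union over the members $s$ of $S$ of the right cosets $\langle s\rangle x$, $x\in G$, with one edge labeled $g$ between $\langle s\rangle x$ and $\langle t\rangle y$ ($s,t$ distinct members of $S$) for each $g\in\langle s\rangle x\cap\langle t\rangle y$; a $G$-graph is a multigraph isomorphic to some $\Phi(G,S)$. *)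

theory Defs
  imports "HOL-Combinatorics.Permutations"
begin

text \<open>Permutations of {1..n} are functions nat => nat that permute {1..n};
  composition f o g applies g first (rightmost first), and powers are funpow.\<close>

definition sigma_perm :: "nat \<Rightarrow> nat \<Rightarrow> nat" where
  "sigma_perm n k = (if 1 \<le> k \<and> k \<le> n - 2 then k + 1 else if k = n - 1 then 1 else k)"

definition rho_perm :: "nat \<Rightarrow> nat \<Rightarrow> nat" where
  "rho_perm n k = (if k = n - 1 then n else if k = n then n - 1
                   else if 1 \<le> k \<and> k \<le> n - 2 then n - 1 - k else k)"

inductive_set gen_perm_group :: "('a \<Rightarrow> 'a) set \<Rightarrow> ('a \<Rightarrow> 'a) set" for S where
  gen_id: "id \<in> gen_perm_group S"
| gen_mult: "g \<in> gen_perm_group S \<Longrightarrow> s \<in> S \<Longrightarrow> s \<circ> g \<in> gen_perm_group S"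
| gen_inv: "g \<in> gen_perm_group S \<Longrightarrow> s \<in> S \<Longrightarrow> inv s \<circ> g \<in> gen_perm_group S"

definition perm_orbit :: "('a \<Rightarrow> 'a) set \<Rightarrow> 'a \<Rightarrow> 'a set" where
  "perm_orbit S x = {g x | g. g \<in> gen_perm_group S}"

definition perm_orbits :: "('a \<Rightarrow> 'a) set \<Rightarrow> 'a set \<Rightarrow> 'a set set" where
  "perm_orbits S X = perm_orbit S ` X"

end

theory Submission
  imports Defs
begin

text \<open>
  Evaluating the hypothesis on \<open>\<tau>\<close> at suitable points gives the braid relation
  \<open>\<tau> \<rho> \<tau> = \<rho> \<tau> \<rho>\<close>. With \<open>\<rho>\<^sup>2 = \<tau>\<^sup>2 = 1\<close> this makes \<open>\<langle>\<rho>, \<tau>\<rangle>\<close> a quotient of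
  \<open>S\<^sub>3 = \<langle>r, t | r\<^sup>2, t\<^sup>2, (r t)\<^sup>3\<rangle>\<close>, so every orbit is \<open>{x, r x, t x, r t x, t r x, r t r x}\<close>:
  it has 1 or 3 points iff it contains a fixed point of \<open>r\<close>, 2 points iff it is \<open>{x, r x}\<close> with
  \<open>t x = r x\<close>, and 6 points otherwise. On \<open>{1..n}\<close> the permutation \<open>\<rho>\<close> fixes only \<open>(n - 1)/2\<close>,
  and only for odd \<open>n\<close>. The 2-point orbits are \<open>{n - 1, n}\<close> and the sets \<open>{c, \<rho> c}\<close> with
  \<open>c \<le> n - 2\<close> and \<open>\<tau> c = \<rho> c\<close>; for two such points \<open>c, d\<close> with \<open>c + d \<noteq> n - 1\<close> the relation
  makes \<open>\<sigma>\<^sup>-\<^sup>c\<close> and \<open>\<sigma>\<^sup>-\<^sup>d\<close> agree at a point of the \<open>(n - 1)\<close>-cycle, forcing \<open>c = d\<close>.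
\<close>

lemma self_in_perm_orbit: "x \<in> perm_orbit S x"
  unfolding perm_orbit_def using gen_perm_group.gen_id[of S] by (metis (mono_tags) id_apply mem_Collect_eq)

lemma perm_orbit_closed:
  assumes "y \<in> perm_orbit S x" "s \<in> S"
  shows "s y \<in> perm_orbit S x"
proof -
  obtain g where g: "g \<in> gen_perm_group S" "y = g x"
    using assms(1) unfolding perm_orbit_def by blast
  then have "s \<circ> g \<in> gen_perm_group S"
    using gen_perm_group.gen_mult assms(2) by blast
  then show ?thesis
    unfolding perm_orbit_def using g(2) by (metis (mono_tags) comp_apply mem_Collect_eq)
qed

lemma perm_orbit_least:
  assumes "x \<in> A" and "\<And>y s. y \<in> A \<Longrightarrow> s \<in> S \<Longrightarrow> s y \<in> A \<and> inv s y \<in> A"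
  shows "perm_orbit S x \<subseteq> A"
proof -
  have "g x \<in> A" if "g \<in> gen_perm_group S" for g
    using that by induction (use assms in auto)
  then show ?thesis unfolding perm_orbit_def by blast
qed

locale involution_braid =
  fixes r t :: "'a \<Rightarrow> 'a"
  assumes r_r [simp]: "r (r x) = x"
    and t_t [simp]: "t (t x) = x"
    and braid: "t (r (t x)) = r (t (r x))"
begin

definition orb :: "'a \<Rightarrow> 'a set" where
  "orb x = {x, r x, t x, r (t x), t (r x), r (t (r x))}"

lemma t_r_t_r: "t (r (t (r x))) = r (t x)"
  by (metis braid r_r t_t)

lemma self_in_orb: "x \<in> orb x"
  by (simp add: orb_def)

lemma orb_closed:
  assumes "y \<in> orb x" shows "r y \<in> orb x" "t y \<in> orb x"
  using assms unfolding orb_def by (auto simp: braid t_r_t_r)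

lemma orb_sym: "y \<in> orb x \<Longrightarrow> x \<in> orb y"
  unfolding orb_def by (auto simp: braid t_r_t_r)

lemma orb_subset: "y \<in> orb x \<Longrightarrow> orb y \<subseteq> orb x"
  unfolding orb_def[of y] using orb_closed by blast

lemma orb_eq: "y \<in> orb x \<Longrightarrow> orb y = orb x"
  using orb_subset orb_sym by blast

lemma perm_orbit_eq_orb: "perm_orbit {r, t} x = orb x"
proof
  have "inv r = r" "inv t = t"
    by (simp_all add: inv_equality)
  then show "perm_orbit {r, t} x \<subseteq> orb x"
    using self_in_orb orb_closed by (intro perm_orbit_least) auto
  have "r y \<in> perm_orbit {r, t} x" "t y \<in> perm_orbit {r, t} x"
    if "y \<in> perm_orbit {r, t} x" for y
    using that by (simp_all add: perm_orbit_closed)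
  then show "orb x \<subseteq> perm_orbit {r, t} x"
    unfolding orb_def using self_in_perm_orbit[of x] by blast
qed

lemma card_orb_r_fixed:
  assumes "r y = y" shows "card (orb y) \<in> {1, 3}"
proof (cases "t y = y")
  case True
  then have "orb y = {y}"
    using assms unfolding orb_def by simp
  then show ?thesis by simp
next
  case False
  then have "distinct [y, t y, r (t y)]"
    using assms by simp (metis braid r_r t_t)
  moreover have "orb y = {y, t y, r (t y)}"
    using assms unfolding orb_def by auto
  ultimately show ?thesis
    using distinct_card by fastforce
qed

lemma card_orb_cases:
  obtains "\<exists>y \<in> orb x. r y = y" "card (orb x) \<in> {1, 3}"
  | "t x = r x" "orb x = {x, r x}" "card (orb x) = 2"
  | "card (orb x) = 6"
proof (cases "\<exists>y \<in> orb x. r y = y")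
  case True
  then obtain y where "y \<in> orb x" "r y = y" ..
  then have "card (orb x) \<in> {1, 3}"
    using card_orb_r_fixed orb_eq by metis
  with True show ?thesis by (rule that(1))
next
  case no_fixed: False
  show ?thesis
  proof (cases "t x = r x")
    case True
    then have "t (r x) = x"
      by (metis t_t)
    with True have "orb x = {x, r x}" "r x \<noteq> x"
      using no_fixed self_in_orb unfolding orb_def by auto
    then show ?thesis using that(2) True by simp
  next
    case False
    have "r (t (r x)) = t (r x)" if "t x = x"
      using that braid by metis
    moreover have "r (t x) = t x" if "r (t (r x)) = x"
      using that braid t_t by metis
    moreover have "t (r x) \<in> orb x" "t x \<in> orb x"
      by (simp_all add: orb_def)
    ultimately have "r x \<noteq> x" "t x \<noteq> x" "r (t (r x)) \<noteq> x"
      using no_fixed self_in_orb by metis+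
    moreover have "r (t x) \<noteq> x"
      using False by (metis r_r)
    ultimately have "distinct [x, r x, t x, r (t x), t (r x), r (t (r x))]"
      by simp (metis r_r t_t braid)
    then have "card (orb x) = 6"
      unfolding orb_def using distinct_card by fastforce
    then show ?thesis using that(3) by simp
  qed
qed

end

lemma sigma_perm_funpow:
  assumes "1 \<le> x" "x \<le> n - 1"
  shows "(sigma_perm n ^^ j) x = (x - 1 + j) mod (n - 1) + 1"
proof (induction j)
  case 0
  then show ?case using assms by simp
next
  case (Suc j)
  define q where "q = (x - 1 + j) mod (n - 1)"
  have "q < n - 1"
    using assms unfolding q_def by simp
  moreover have "(x - 1 + Suc j) mod (n - 1) = (if Suc q = n - 1 then 0 else Suc q)"
    unfolding q_def by (simp add: mod_Suc)
  ultimately show ?case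
    using Suc unfolding q_def[symmetric] by (auto simp: sigma_perm_def)
qed

lemma sigma_perm_funpow_commute:
  assumes "1 \<le> a" "a \<le> n - 1" "1 \<le> b" "b \<le> n - 1"
  shows "(sigma_perm n ^^ a) b = (sigma_perm n ^^ b) a"
  using assms by (simp add: sigma_perm_funpow add.commute)

lemma sigma_perm_funpow_range:
  assumes "1 \<le> x" "x \<le> n - 1"
  shows "1 \<le> (sigma_perm n ^^ j) x" "(sigma_perm n ^^ j) x \<le> n - 1"
proof -
  have "(x - 1 + j) mod (n - 1) < n - 1"
    using assms by simp
  then show "1 \<le> (sigma_perm n ^^ j) x" "(sigma_perm n ^^ j) x \<le> n - 1"
    unfolding sigma_perm_funpow[OF assms] by linarith+
qed

lemma sigma_perm_funpow_inject:
  assumes "1 \<le> x" "x \<le> n - 1" "a < n - 1" "b < n - 1"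
    and "(sigma_perm n ^^ a) x = (sigma_perm n ^^ b) x"
  shows "a = b"
proof -
  have "(x - 1 + a) mod (n - 1) = (x - 1 + b) mod (n - 1)"
    using assms by (simp add: sigma_perm_funpow)
  then have "a mod (n - 1) = b mod (n - 1)"
    by (simp add: nat_mod_eq_iff)
  then show ?thesis
    using assms(3,4) by simp
qed

lemma sigma_perm_funpow_to_last:
  assumes "j < n - 1"
  shows "(sigma_perm n ^^ j) (n - 1 - j) = n - 1"
  using assms by (simp add: sigma_perm_funpow)

lemma rho_perm_mid: "1 \<le> k \<Longrightarrow> k \<le> n - 2 \<Longrightarrow> rho_perm n k = n - 1 - k"
  unfolding rho_perm_def by auto

lemma rho_perm_mid_range:
  assumes "1 \<le> x" "x \<le> n - 2"
  shows "1 \<le> rho_perm n x" "rho_perm n x \<le> n - 2"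
  using assms by (simp_all add: rho_perm_mid)

lemma rho_perm_last_two:
  assumes "n \<ge> 2"
  shows "rho_perm n (n - 1) = n" "rho_perm n n = n - 1"
  using assms unfolding rho_perm_def by auto

lemma rho_perm_outside: "n \<ge> 2 \<Longrightarrow> x \<notin> {1..n} \<Longrightarrow> rho_perm n x = x"
  unfolding rho_perm_def by auto

lemma rho_perm_rho_perm:
  assumes "n \<ge> 2" shows "rho_perm n (rho_perm n x) = x"
  using assms unfolding rho_perm_def by auto

lemma rho_perm_in_range:
  assumes "n \<ge> 2" "x \<in> {1..n}" shows "rho_perm n x \<in> {1..n}"
  using assms unfolding rho_perm_def by auto

lemma rho_perm_fixed_iff:
  assumes "x \<in> {1..n}" "n \<ge> 2"
  shows "rho_perm n x = x \<longleftrightarrow> odd n \<and> x = (n - 1) div 2"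
  using assms unfolding rho_perm_def by auto presburger+

locale admissible_tau =
  fixes n :: nat and \<tau> :: "nat \<Rightarrow> nat"
  assumes n_ge_2: "n \<ge> 2"
    and tau_permutes: "\<tau> permutes {1..n}"
    and tau_involution: "\<tau> \<circ> \<tau> = id"
    and tau_n: "\<tau> n = n - 1"
    \<comment> \<open>\<open>\<tau> \<noteq> id\<close> is not assumed: it follows from \<open>\<tau> n = n - 1\<close>.\<close>
    and tau_sigma_relation: "\<forall>k \<in> {1..n-2}. \<tau> \<circ> (sigma_perm n ^^ k) \<circ> \<tau>
            = (sigma_perm n ^^ (\<tau> k)) \<circ> \<tau> \<circ> (sigma_perm n ^^ ((\<tau> \<circ> rho_perm n \<circ> \<tau>) k))"
begin

abbreviation "\<sigma> \<equiv> sigma_perm n"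
abbreviation "\<rho> \<equiv> rho_perm n"

lemma tau_tau [simp]: "\<tau> (\<tau> x) = x"
  using fun_cong[OF tau_involution] by simp

lemma tau_n_minus_1: "\<tau> (n - 1) = n"
  by (metis tau_n tau_tau)

lemma tau_in_range: "x \<in> {1..n} \<Longrightarrow> \<tau> x \<in> {1..n}"
  using tau_permutes by (rule permutes_in_image[THEN iffD2])

lemma tau_outside: "x \<notin> {1..n} \<Longrightarrow> \<tau> x = x"
  using tau_permutes by (simp add: permutes_not_in)

lemma tau_mid:
  assumes "1 \<le> x" "x \<le> n - 2"
  shows "1 \<le> \<tau> x" "\<tau> x \<le> n - 2"
proof -
  have "x \<noteq> n" "x \<noteq> n - 1"
    using assms n_ge_2 by auto
  then have "\<tau> x \<noteq> n - 1" "\<tau> x \<noteq> n"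
    using tau_n tau_n_minus_1 by (metis tau_tau)+
  moreover have "\<tau> x \<in> {1..n}"
    using assms n_ge_2 by (intro tau_in_range) auto
  ultimately show "1 \<le> \<tau> x" "\<tau> x \<le> n - 2"
    by auto
qed

lemma tau_sigma_relation_at:
  assumes "1 \<le> k" "k \<le> n - 2"
  shows "\<tau> ((\<sigma> ^^ k) (\<tau> x)) = (\<sigma> ^^ \<tau> k) (\<tau> ((\<sigma> ^^ \<tau> (\<rho> (\<tau> k))) x))"
  using fun_cong[OF tau_sigma_relation[rule_format, of k], of x] assms by simp

lemma tau_rho_braid_mid:
  assumes "1 \<le> y" "y \<le> n - 2"
  shows "\<tau> (\<rho> (\<tau> y)) = \<rho> (\<tau> (\<rho> y))"
proof -
  \<comment> \<open>At \<open>k = \<tau> y\<close> and the point \<open>\<tau> (\<rho> k)\<close> the left side of the relation is \<open>\<tau> (n - 1) = n\<close>;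
    the right side can only reach \<open>n\<close> if \<open>\<sigma>\<^sup>b\<close> sends \<open>\<tau> (\<rho> k)\<close> to \<open>n - 1\<close>, i.e. \<open>\<tau> (\<rho> k) = \<rho> b\<close>.\<close>
  define k where "k = \<tau> y"
  define b where "b = \<tau> (\<rho> y)"
  define z where "z = (\<sigma> ^^ b) (\<tau> (\<rho> k))"
  have k: "1 \<le> k" "k \<le> n - 2"
    unfolding k_def using tau_mid assms by auto
  have b: "1 \<le> b" "b \<le> n - 2"
    unfolding b_def using tau_mid rho_perm_mid_range assms by metis+
  have x0: "1 \<le> \<tau> (\<rho> k)" "\<tau> (\<rho> k) \<le> n - 2"
    using tau_mid rho_perm_mid_range k by metis+
  have "\<tau> ((\<sigma> ^^ k) (\<rho> k)) = n"
    using k sigma_perm_funpow_to_last[of k n] tau_n_minus_1 by (simp add: rho_perm_mid)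
  moreover have "\<tau> ((\<sigma> ^^ k) (\<rho> k)) = (\<sigma> ^^ \<tau> k) (\<tau> z)"
    using tau_sigma_relation_at[OF k, of "\<tau> (\<rho> k)"] unfolding z_def b_def k_def by simp
  ultimately have last: "(\<sigma> ^^ \<tau> k) (\<tau> z) = n"
    by simp
  have "z = n - 1"
  proof (rule ccontr)
    assume "z \<noteq> n - 1"
    moreover have "1 \<le> z" "z \<le> n - 1"
      unfolding z_def using sigma_perm_funpow_range x0 by auto
    ultimately have "1 \<le> \<tau> z" "\<tau> z \<le> n - 2"
      using tau_mid by auto
    then have "(\<sigma> ^^ \<tau> k) (\<tau> z) \<le> n - 1"
      using sigma_perm_funpow_range by auto
    with last n_ge_2 show False by simp
  qed
  have "(\<sigma> ^^ \<tau> (\<rho> k)) b = z"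
    unfolding z_def using x0 b by (simp add: sigma_perm_funpow_commute)
  also have "\<dots> = (\<sigma> ^^ b) (n - 1 - b)"
    using \<open>z = n - 1\<close> b sigma_perm_funpow_to_last by simp
  also have "\<dots> = (\<sigma> ^^ (n - 1 - b)) b"
    using b by (simp add: sigma_perm_funpow_commute)
  finally have "\<tau> (\<rho> k) = n - 1 - b"
    by (rule sigma_perm_funpow_inject[rotated 4]) (use x0 b in auto)
  then show ?thesis
    using rho_perm_mid[OF b] unfolding k_def b_def by simp
qed

lemma tau_rho_braid: "\<tau> (\<rho> (\<tau> y)) = \<rho> (\<tau> (\<rho> y))"
proof -
  consider "1 \<le> y \<and> y \<le> n - 2" | "y = n - 1" | "y = n" | "y \<notin> {1..n}"
    by fastforce
  then show ?thesis
  proof cases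
    case 1
    then show ?thesis using tau_rho_braid_mid by blast
  qed (use n_ge_2 tau_n tau_n_minus_1 rho_perm_last_two rho_perm_outside tau_outside in auto)
qed

sublocale involution_braid \<rho> \<tau>
  by unfold_locales (simp_all add: rho_perm_rho_perm n_ge_2 tau_rho_braid)

lemma tau_sigma_relation_at_tau_eq_rho:
  assumes c: "1 \<le> c" "c \<le> n - 2" "\<tau> c = \<rho> c" and d: "1 \<le> d" "d \<le> n - 2" "\<tau> d = \<rho> d"
  shows "\<tau> ((\<sigma> ^^ c) d) = (\<sigma> ^^ (n - 1 - c)) (\<tau> ((\<sigma> ^^ (n - 1 - c)) (n - 1 - d)))"
proof -
  have "\<tau> (n - 1 - d) = d" "\<tau> c = n - 1 - c"
    using c d by (metis rho_perm_mid tau_tau)+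
  moreover have "\<tau> (\<rho> (\<tau> c)) = n - 1 - c"
    using c by (simp add: rho_perm_rho_perm n_ge_2 rho_perm_mid)
  ultimately show ?thesis
    using tau_sigma_relation_at[OF c(1,2), of "n - 1 - d"] by simp
qed

lemma tau_eq_rho_unique:
  assumes c: "1 \<le> c" "c \<le> n - 2" "\<tau> c = \<rho> c" and d: "1 \<le> d" "d \<le> n - 2" "\<tau> d = \<rho> d"
  shows "d = c \<or> d = \<rho> c"
proof (cases "c + d = n - 1")
  case True
  then have "d = \<rho> c"
    using c by (simp add: rho_perm_mid)
  then show ?thesis ..
next
  case False
  define w where "w = (\<sigma> ^^ (n - 1 - c)) (n - 1 - d)"
  have w_sym: "w = (\<sigma> ^^ (n - 1 - d)) (n - 1 - c)"
    unfolding w_def using c d by (simp add: sigma_perm_funpow_commute)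
  have "w \<noteq> n - 1"
  proof
    assume "w = n - 1"
    then have "(\<sigma> ^^ (n - 1 - c)) (n - 1 - d) = (\<sigma> ^^ d) (n - 1 - d)"
      unfolding w_def using d sigma_perm_funpow_to_last by simp
    then have "n - 1 - c = d"
      by (rule sigma_perm_funpow_inject[rotated 4]) (use c d in auto)
    with False c show False by simp
  qed
  moreover have "1 \<le> w" "w \<le> n - 1"
    unfolding w_def using d sigma_perm_funpow_range by auto
  ultimately have tau_w: "1 \<le> \<tau> w" "\<tau> w \<le> n - 2"
    using tau_mid by auto
  have "(\<sigma> ^^ (n - 1 - c)) (\<tau> w) = \<tau> ((\<sigma> ^^ c) d)"
    using tau_sigma_relation_at_tau_eq_rho[OF c d] unfolding w_def by simp
  also have "\<dots> = \<tau> ((\<sigma> ^^ d) c)"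
    using c d by (simp add: sigma_perm_funpow_commute)
  also have "\<dots> = (\<sigma> ^^ (n - 1 - d)) (\<tau> w)"
    using tau_sigma_relation_at_tau_eq_rho[OF d c] unfolding w_sym by simp
  finally have "n - 1 - c = n - 1 - d"
    by (rule sigma_perm_funpow_inject[rotated 4]) (use c d tau_w in auto)
  then have "d = c"
    using c d by simp
  then show ?thesis ..
qed

lemma perm_orbits_eq: "perm_orbits {\<rho>, \<tau>} {1..n} = orb ` {1..n}"
  by (simp add: perm_orbits_def perm_orbit_eq_orb)

lemma orb_subset_range: "x \<in> {1..n} \<Longrightarrow> orb x \<subseteq> {1..n}"
  unfolding orb_def using tau_in_range rho_perm_in_range[OF n_ge_2] by blast

lemma orb_n_minus_1: "orb (n - 1) = {n - 1, n}"
  unfolding orb_def tau_n tau_n_minus_1 rho_perm_last_two[OF n_ge_2] by auto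

lemma card_orb:
  assumes "x \<in> {1..n}"
  shows "card (orb x) = 6 \<or> card (orb x) = 2 \<or> odd n \<and> card (orb x) \<in> {1, 3}"
proof (cases x rule: card_orb_cases)
  case 1
  then obtain y where "y \<in> orb x" "\<rho> y = y" by blast
  then have "odd n"
    using orb_subset_range[OF assms] rho_perm_fixed_iff n_ge_2 by blast
  with 1 show ?thesis by simp
qed simp_all

lemma two_point_orb:
  assumes "x \<in> {1..n}" "card (orb x) = 2"
  shows "orb x = {n - 1, n} \<or> (\<exists>c. 1 \<le> c \<and> c \<le> n - 2 \<and> \<tau> c = \<rho> c \<and> orb x = {c, \<rho> c})"
proof (cases x rule: card_orb_cases)
  case 2
  consider "x = n - 1" | "x = n" | "1 \<le> x \<and> x \<le> n - 2"
    using assms(1) by fastforce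
  then show ?thesis
    using 2 orb_n_minus_1 rho_perm_last_two n_ge_2 by cases auto
qed (use assms(2) in auto)

lemma card_two_point_orbits: "card {A \<in> orb ` {1..n}. card A = 2} \<in> {1, 2}"
proof -
  let ?C = "{A \<in> orb ` {1..n}. card A = 2}"
  have two_point: "A = {n - 1, n} \<or> (\<exists>c. 1 \<le> c \<and> c \<le> n - 2 \<and> \<tau> c = \<rho> c \<and> A = {c, \<rho> c})"
    if "A \<in> ?C" for A
    using that two_point_orb by blast
  obtain B where "?C \<subseteq> {{n - 1, n}, B}"
  proof (cases "\<exists>c. 1 \<le> c \<and> c \<le> n - 2 \<and> \<tau> c = \<rho> c")
    case True
    then obtain c where c: "1 \<le> c" "c \<le> n - 2" "\<tau> c = \<rho> c" by blast
    have "{d, \<rho> d} = {c, \<rho> c}" if "1 \<le> d" "d \<le> n - 2" "\<tau> d = \<rho> d" for d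
      using tau_eq_rho_unique[OF c that] rho_perm_rho_perm[OF n_ge_2] by auto
    then have "?C \<subseteq> {{n - 1, n}, {c, \<rho> c}}"
      using two_point by blast
    then show ?thesis by (rule that)
  next
    case False
    then have "?C \<subseteq> {{n - 1, n}, {n - 1, n}}"
      using two_point by blast
    then show ?thesis by (rule that)
  qed
  then have "card ?C \<le> card {{n - 1, n}, B}"
    by (intro card_mono) simp_all
  also have "\<dots> \<le> 2"
    by (simp add: card_insert_if)
  finally have "card ?C \<le> 2" .
  moreover have "n - 1 \<in> {1..n}" "card (orb (n - 1)) = 2"
    using n_ge_2 orb_n_minus_1 by auto
  then have "card ?C \<noteq> 0"
    by (auto simp: card_eq_0_iff)
  ultimately have "card ?C = 1 \<or> card ?C = 2"
    by linarith
  then show ?thesis by simp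
qed

lemma card_fixed_point_orbits:
  assumes "odd n"
  shows "card {A \<in> orb ` {1..n}. card A \<in> {1, 3}} = 1"
proof -
  define p where "p = (n - 1) div 2"
  have p: "p \<in> {1..n}"
    using assms n_ge_2 unfolding p_def by (auto elim: oddE)
  then have "\<rho> p = p"
    using assms rho_perm_fixed_iff n_ge_2 unfolding p_def by blast
  have "{A \<in> orb ` {1..n}. card A \<in> {1, 3}} = {orb p}"
  proof (intro equalityI subsetI)
    fix A assume "A \<in> {A \<in> orb ` {1..n}. card A \<in> {1, 3}}"
    then obtain x where x: "x \<in> {1..n}" "A = orb x" "card (orb x) \<in> {1, 3}" by auto
    then obtain y where "y \<in> orb x" "\<rho> y = y"
      by (cases x rule: card_orb_cases) auto
    moreover from this have "y = p"
      using orb_subset_range[OF x(1)] rho_perm_fixed_iff n_ge_2 unfolding p_def by blast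
    ultimately show "A \<in> {orb p}"
      using x(2) orb_eq by simp
  qed (use p \<open>\<rho> p = p\<close> card_orb_r_fixed in auto)
  then show ?thesis by simp
qed

end

theorem proposition9:
  fixes n :: nat and \<tau> :: "nat \<Rightarrow> nat"
  assumes "n \<ge> 2"
    and "\<tau> permutes {1..n}"
    and "\<tau> \<circ> \<tau> = id" and "\<tau> \<noteq> id"
    and "\<tau> n = n - 1"
    and "\<forall>k \<in> {1..n-2}. \<tau> \<circ> (sigma_perm n ^^ k) \<circ> \<tau>
            = (sigma_perm n ^^ (\<tau> k)) \<circ> \<tau> \<circ> (sigma_perm n ^^ ((\<tau> \<circ> rho_perm n \<circ> \<tau>) k))"
  shows "let Orbs = perm_orbits {rho_perm n, \<tau>} {1..n} in
           card {A \<in> Orbs. card A = 2} \<in> {1, 2}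
         \<and> (\<forall>A \<in> Orbs. card A = 6 \<or> card A = 2 \<or> (odd n \<and> card A \<in> {1, 3}))
         \<and> (odd n \<longrightarrow> card {A \<in> Orbs. card A \<in> {1, 3}} = 1)"
proof -
  interpret admissible_tau n \<tau>
    using assms by unfold_locales
  show ?thesis
    unfolding Let_def perm_orbits_eq
    using card_two_point_orbits card_orb card_fixed_point_orbits by auto
qed

end
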